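(* Let $(v_i)_{i\in N}$ be a typical profile, let all agents report truthfully ($\hat v_i=v_i$), and let $b$ and $x$ be the bids and fractional allocation computed by the PRD Mechanism. Then for all agents $i\neq k$, $$fEM_{ik}:=\sum_{j\in M}\bar v_{ij}\,(x_{ij}-x_{kj})=\frac{1}{nC}\sum_{j\in M}\bar v_{ij}\big(\log b_{ij}-\log b_{kj}\big)\;\ge\;\frac{\delta^2}{4nC},$$ where $\bar v_{ij}=v_{ij}/\sum_{j'}v_{ij'}$.
   Context: Setting (random model). There are $n$ agents $N=\{1,\dots,n\}$ and $m$ items $M=\{1,\dots,m\}$. Agent $i$ has an additive valuation given by a vector $v_i\in[0,1]^m$, so $v_i(S)=\sum_{j\in S}v_{ij}$. For each item $j$, the vector $(v_{1j},\dots,v_{nj})$ is drawn from a joint distribution $\mathcal D$ on $[0,1]^n$, independently across items (values of different agents for the same item may be correlated). Let $\mu_i$ be the mean of the marginal distribution of agent $i$. Standing assumptions: there are constants $\mu_l>0$ and $\delta\in(0,1)$, independent of $n$ and $m$, such that $\mu_i\ge \mu_l$ for all $i$, and $\mathbb E\big[\,|v_{ij}/\mu_i-v_{kj}/\mu_k|\,\big]\ge\delta$ for all $i\ne k$. Typicality: for a fixed constant $\varepsilon\in(0,\delta/25)$, a profile $(v_i)_{i\in N}$ is typical if (T1) for all $i$, $\sum_j v_{ij}\in[(1-\varepsilon)m\mu_i,(1+\varepsilon)m\mu_i]$, and (T2) for all $i\neq k$, $\sum_j |v_{ij}/\mu_i-v_{kj}/\mu_k|\ge(1-\varepsilon)\delta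 m$. PRD Mechanism. Parameters: $l:=\delta/25$, $b_{\min}:=l/m$, $b_{\max}:=2/(\mu_l m)$, $c:=-\log(l/m)$, $C:=\log\big(2/(\mu_l l)\big)$ (natural logarithms). Each agent $i$ reports a vector $\hat v_i\in[0,1]^m$ with $\sum_j\hat v_{ij}>0$. Bid construction: let $\bar v_{ij}:=\hat v_{ij}/\sum_{j'}\hat v_{ij'}$; for $s\ge 0$ let $b_{ij}(s):=\min\{\max\{s\bar v_{ij},b_{\min}\},b_{\max}\}$ and $h_i(s):=\sum_j b_{ij}(s)$ (a continuous nondecreasing function with $h_i(0)=l<1$). If $\sup_{s\ge0}h_i(s)\ge1$, pick $s_i\ge0$ with $h_i(s_i)=1$ (a scale factor) and set $b_{ij}:=b_{ij}(s_i)$. Otherwise set $b_{ij}:=b_{\max}$ for every $j$ with $\hat v_{ij}>0$ and choose the remaining $b_{ij}\in[b_{\min},b_{\max}]$ arbitrarily so that $\sum_j b_{ij}=1$. Fractional allocation: $x_{ij}:=\frac{\log b_{ij}+c}{nC}+\frac{nC-\sum_{k\in N}(\log b_{kj}+c)}{n^2C}$ (so $x_{ij}\in[0,1]$ and $\sum_i x_{ij}=1$). Rounding: each item $j$ is independently assigned to exactly one agent, to agent $i$ with probability $x_{ij}$; $A_i$ denotes the set of items agent $i$ receives. *)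

theory Defs
  imports "HOL-Probability.Probability"
begin

text \<open>Agents are indexed by {..<n}, items by {..<m}. A profile / bid vector is a
  function nat => nat => real, agent first, item second.\<close>

text \<open>Mean of agent i's marginal under the joint per-item distribution D on [0,1]^n.\<close>
definition agent_mean :: "(nat \<Rightarrow> real) measure \<Rightarrow> nat \<Rightarrow> real" where
  "agent_mean D i = integral\<^sup>L D (\<lambda>\<omega>. \<omega> i)"

definition standing_assumptions ::
  "nat \<Rightarrow> (nat \<Rightarrow> real) measure \<Rightarrow> real \<Rightarrow> real \<Rightarrow> bool" where
  "standing_assumptions n D \<mu>l \<delta> \<longleftrightarrow>
     prob_space D \<and>
     (\<forall>i<n. (\<lambda>\<omega>. \<omega> i) \<in> borel_measurable D) \<and>
     (\<forall>\<omega>\<in>space D. \<forall>i<n. 0 \<le> \<omega> i \<and> \<omega> i \<le> 1) \<and>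
     0 < \<mu>l \<and> 0 < \<delta> \<and> \<delta> < 1 \<and>
     (\<forall>i<n. agent_mean D i \<ge> \<mu>l) \<and>
     (\<forall>i<n. \<forall>k<n. i \<noteq> k \<longrightarrow>
        integral\<^sup>L D (\<lambda>\<omega>. \<bar>\<omega> i / agent_mean D i - \<omega> k / agent_mean D k\<bar>) \<ge> \<delta>)"

definition typical ::
  "nat \<Rightarrow> nat \<Rightarrow> (nat \<Rightarrow> real) \<Rightarrow> real \<Rightarrow> real \<Rightarrow> (nat \<Rightarrow> nat \<Rightarrow> real) \<Rightarrow> bool" where
  "typical n m \<mu> \<delta> \<epsilon> v \<longleftrightarrow>
     (\<forall>i<n. (1 - \<epsilon>) * m * \<mu> i \<le> (\<Sum>j<m. v i j) \<and> (\<Sum>j<m. v i j) \<le> (1 + \<epsilon>) * m * \<mu> i) \<and>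
     (\<forall>i<n. \<forall>k<n. i \<noteq> k \<longrightarrow>
        (\<Sum>j<m. \<bar>v i j / \<mu> i - v k j / \<mu> k\<bar>) \<ge> (1 - \<epsilon>) * \<delta> * m)"

definition prd_l :: "real \<Rightarrow> real" where "prd_l \<delta> = \<delta> / 25"
definition prd_bmin :: "real \<Rightarrow> nat \<Rightarrow> real" where "prd_bmin \<delta> m = prd_l \<delta> / m"
definition prd_bmax :: "real \<Rightarrow> nat \<Rightarrow> real" where "prd_bmax \<mu>l m = 2 / (\<mu>l * m)"
definition prd_c :: "real \<Rightarrow> nat \<Rightarrow> real" where "prd_c \<delta> m = - ln (prd_l \<delta> / m)"
definition prd_C :: "real \<Rightarrow> real \<Rightarrow> real" where "prd_C \<delta> \<mu>l = ln (2 / (\<mu>l * prd_l \<delta>))"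

definition vbar :: "nat \<Rightarrow> (nat \<Rightarrow> nat \<Rightarrow> real) \<Rightarrow> nat \<Rightarrow> nat \<Rightarrow> real" where
  "vbar m v i j = v i j / (\<Sum>j'<m. v i j')"

definition bid_at :: "nat \<Rightarrow> real \<Rightarrow> real \<Rightarrow> (nat \<Rightarrow> nat \<Rightarrow> real) \<Rightarrow> nat \<Rightarrow> real \<Rightarrow> nat \<Rightarrow> real" where
  "bid_at m \<delta> \<mu>l v i s j = min (max (s * vbar m v i j) (prd_bmin \<delta> m)) (prd_bmax \<mu>l m)"

definition h_fun :: "nat \<Rightarrow> real \<Rightarrow> real \<Rightarrow> (nat \<Rightarrow> nat \<Rightarrow> real) \<Rightarrow> nat \<Rightarrow> real \<Rightarrow> real" where
  "h_fun m \<delta> \<mu>l v i s = (\<Sum>j<m. bid_at m \<delta> \<mu>l v i s j)"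

text \<open>b is a possible bid vector computed by the PRD Mechanism on reports v
  (covering every admissible choice of scale factor / arbitrary completion).\<close>
definition prd_bids ::
  "nat \<Rightarrow> nat \<Rightarrow> real \<Rightarrow> real \<Rightarrow> (nat \<Rightarrow> nat \<Rightarrow> real) \<Rightarrow> (nat \<Rightarrow> nat \<Rightarrow> real) \<Rightarrow> bool" where
  "prd_bids n m \<delta> \<mu>l v b \<longleftrightarrow>
     (\<forall>i<n.
       (if (SUP s\<in>{0..}. h_fun m \<delta> \<mu>l v i s) \<ge> 1
        then (\<exists>s\<ge>0. h_fun m \<delta> \<mu>l v i s = 1 \<and> (\<forall>j<m. b i j = bid_at m \<delta> \<mu>l v i s j))
        else (\<forall>j<m. v i j > 0 \<longrightarrow> b i j = prd_bmax \<mu>l m) \<and>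
             (\<forall>j<m. prd_bmin \<delta> m \<le> b i j \<and> b i j \<le> prd_bmax \<mu>l m) \<and>
             (\<Sum>j<m. b i j) = 1))"

definition prd_alloc ::
  "nat \<Rightarrow> nat \<Rightarrow> real \<Rightarrow> real \<Rightarrow> (nat \<Rightarrow> nat \<Rightarrow> real) \<Rightarrow> nat \<Rightarrow> nat \<Rightarrow> real" where
  "prd_alloc n m \<delta> \<mu>l b i j =
     (ln (b i j) + prd_c \<delta> m) / (n * prd_C \<delta> \<mu>l)
     + (n * prd_C \<delta> \<mu>l - (\<Sum>k<n. ln (b k j) + prd_c \<delta> m)) / (n^2 * prd_C \<delta> \<mu>l)"

end

theory Submission
  imports Defs
begin

text \<open>The correction term of \<open>x\<^sub>i\<^sub>j\<close> is the same for all agents, so it cancels in \<open>x\<^sub>i\<^sub>j - x\<^sub>k\<^sub>j\<close>;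
  this gives the identity. For the bound, on a typical profile each agent's total value exceeds
  \<open>m \<mu>\<^sub>l / 2\<close>, so the fallback branch of the mechanism never fires and every bid vector
  is \<open>b\<^sub>i = clip b_min b_max (s \<cdot> vbar\<^sub>i)\<close> with a scale factor \<open>0 < s \<le> 1\<close>.
  Because \<open>s \<le> 1\<close> and clipping moves a bid only in the favourable direction, the weighted log gap
  \<open>\<Sum>\<^sub>j vbar\<^sub>i\<^sub>j (log b\<^sub>i\<^sub>j - log b\<^sub>k\<^sub>j)\<close> dominates the Kullback-Leibler divergence of \<open>b\<^sub>i\<close> from \<open>b\<^sub>k\<close>,
  hence, by Pinsker, half the squared \<open>\<ell>\<^sub>1\<close> distance of the bid vectors. Clipping at \<open>b_min\<close> moves a
  bid vector by at most \<open>2 m b_min = 2\<delta>/25\<close> in \<open>\<ell>\<^sub>1\<close>, while typicality keeps the normalized value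
  vectors \<open>(1 - \<epsilon>)\<delta> - 2\<epsilon>\<close> apart; so the bid vectors are \<open>18\<delta>/25\<close> apart and
  \<open>(18\<delta>/25)\<^sup>2 / 2 \<ge> \<delta>\<^sup>2/4\<close>.\<close>

section \<open>Pinsker's inequality\<close>

lemma binary_pinsker:
  fixes p q :: real
  assumes q0: "0 < q" and qp: "q \<le> p" and p1: "p < 1"
  shows "2 * (p - q)^2 \<le> p * ln (p / q) + (1 - p) * ln ((1 - p) / (1 - q))"
proof -
  define g where "g x = p * (ln p - ln x) + (1 - p) * (ln (1 - p) - ln (1 - x)) - 2 * (p - x)^2" for x
  define g' where "g' x = - p / x + (1 - p) / (1 - x) + 4 * (p - x)" for x
  have der: "(g has_real_derivative g' x) (at x)" if "x \<in> {q..p}" for x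
    unfolding g_def g'_def using that q0 p1 by (auto intro!: derivative_eq_intros)
  have nonpos: "g' x \<le> 0" if "x \<in> {q..p}" for x
  proof -
    have x0: "0 < x" "x < 1" "x \<le> p" using that q0 p1 by auto
    have factor: "g' x = (p - x) * (4 - 1 / (x * (1 - x)))"
      unfolding g'_def using x0 by (simp add: field_simps)
    have "0 \<le> (x - 1/2)^2" by simp
    then have "x * (1 - x) \<le> 1/4" by (simp add: power2_eq_square field_simps)
    moreover have "0 < x * (1 - x)" using x0 by simp
    ultimately have "4 \<le> 1 / (x * (1 - x))" by (simp add: field_simps)
    then show ?thesis unfolding factor using x0 by (simp add: mult_nonneg_nonpos)
  qed
  have "g p \<le> g q" by (rule deriv_nonpos_imp_antimono[OF der nonpos qp])
  moreover have "g p = 0" unfolding g_def by simp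
  moreover have "g q = p * ln (p / q) + (1 - p) * ln ((1 - p) / (1 - q)) - 2 * (p - q)^2"
    unfolding g_def using q0 qp p1 by (simp add: ln_div)
  ultimately show ?thesis by simp
qed

lemma log_sum_inequality:
  fixes x y :: "'a \<Rightarrow> real"
  assumes fin: "finite A" and pos: "\<forall>j\<in>A. 0 < x j \<and> 0 < y j"
  shows "sum x A * ln (sum x A / sum y A) \<le> (\<Sum>j\<in>A. x j * ln (x j / y j))"
proof (cases "A = {}")
  case True
  then show ?thesis by simp
next
  case False
  define X where "X = sum x A"
  define Y where "Y = sum y A"
  have X0: "0 < X" unfolding X_def using False fin pos by (intro sum_pos) auto
  have Y0: "0 < Y" unfolding Y_def using False fin pos by (intro sum_pos) auto
  have termwise: "x j - y j * X / Y \<le> x j * ln (x j / y j) - x j * ln (X / Y)" if j: "j \<in> A" for j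
  proof -
    have xj: "0 < x j" and yj: "0 < y j" using pos j by auto
    define z where "z = (x j / y j) / (X / Y)"
    have z0: "0 < z" unfolding z_def using xj yj X0 Y0 by simp
    have "ln (1 / z) \<le> 1 / z - 1" using z0 by (intro ln_le_minus_one) simp
    then have lz: "1 - 1 / z \<le> ln z" using z0 by (simp add: ln_div)
    have "ln z = ln (x j / y j) - ln (X / Y)"
      unfolding z_def using xj yj X0 Y0 by (simp add: ln_div ln_mult)
    moreover have "x j * (1 - 1 / z) = x j - y j * X / Y"
      unfolding z_def using xj yj X0 Y0 by (simp add: field_simps)
    ultimately have "x j - y j * X / Y \<le> x j * (ln (x j / y j) - ln (X / Y))"
      using mult_left_mono[OF lz, of "x j"] xj by simp
    then show ?thesis by (simp add: algebra_simps)
  qed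
  have "(\<Sum>j\<in>A. x j - y j * X / Y) \<le> (\<Sum>j\<in>A. x j * ln (x j / y j) - x j * ln (X / Y))"
    using termwise by (intro sum_mono) auto
  moreover have "(\<Sum>j\<in>A. x j - y j * X / Y) = 0"
    using Y0 by (simp add: sum_subtractf sum_divide_distrib[symmetric]
        sum_distrib_right[symmetric] X_def[symmetric] Y_def[symmetric])
  moreover have "(\<Sum>j\<in>A. x j * ln (x j / y j) - x j * ln (X / Y))
      = (\<Sum>j\<in>A. x j * ln (x j / y j)) - X * ln (X / Y)"
    by (simp add: sum_subtractf sum_distrib_right[symmetric] X_def)
  ultimately show ?thesis unfolding X_def Y_def by simp
qed

text \<open>Split the support into the part \<open>A\<close> where \<open>b \<ge> c\<close> and its complement: the \<open>\<ell>\<^sub>1\<close> distance is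
  \<open>2 (b(A) - c(A))\<close>, and the log-sum inequality on both parts reduces everything to
  \<open>binary_pinsker\<close>.\<close>

lemma pinsker_inequality:
  fixes b c :: "'a \<Rightarrow> real"
  assumes fin: "finite J" and pos: "\<forall>j\<in>J. 0 < b j \<and> 0 < c j"
    and sb: "sum b J = 1" and sc: "sum c J = 1"
  shows "(\<Sum>j\<in>J. \<bar>b j - c j\<bar>)^2 / 2 \<le> (\<Sum>j\<in>J. b j * ln (b j / c j))"
proof -
  define A where "A = {j\<in>J. c j \<le> b j}"
  define B where "B = {j\<in>J. \<not> c j \<le> b j}"
  have finA: "finite A" and finB: "finite B" using fin unfolding A_def B_def by auto
  have split: "sum f J = sum f A + sum f B" for f :: "'a \<Rightarrow> real"
  proof -
    have "J = A \<union> B" and "A \<inter> B = {}" unfolding A_def B_def by auto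
    then show ?thesis using finA finB by (simp add: sum.union_disjoint)
  qed
  define P where "P = sum b A"
  define Q where "Q = sum c A"
  have bB: "sum b B = 1 - P" using split[of b] sb P_def by simp
  have cB: "sum c B = 1 - Q" using split[of c] sc Q_def by simp
  have "(\<Sum>j\<in>A. \<bar>b j - c j\<bar>) = P - Q"
    unfolding P_def Q_def sum_subtractf[symmetric] by (rule sum.cong) (auto simp: A_def)
  moreover have "(\<Sum>j\<in>B. \<bar>b j - c j\<bar>) = (1 - Q) - (1 - P)"
    unfolding bB[symmetric] cB[symmetric] sum_subtractf[symmetric]
    by (rule sum.cong) (auto simp: B_def)
  ultimately have dist: "(\<Sum>j\<in>J. \<bar>b j - c j\<bar>) = 2 * (P - Q)"
    using split[of "\<lambda>j. \<bar>b j - c j\<bar>"] by simp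
  have "P * ln (P / Q) \<le> (\<Sum>j\<in>A. b j * ln (b j / c j))"
    unfolding P_def Q_def using finA pos by (intro log_sum_inequality) (auto simp: A_def)
  moreover have "(1 - P) * ln ((1 - P) / (1 - Q)) \<le> (\<Sum>j\<in>B. b j * ln (b j / c j))"
    unfolding bB[symmetric] cB[symmetric] using finB pos
    by (intro log_sum_inequality) (auto simp: B_def)
  ultimately have coarse: "P * ln (P / Q) + (1 - P) * ln ((1 - P) / (1 - Q))
      \<le> (\<Sum>j\<in>J. b j * ln (b j / c j))"
    using split[of "\<lambda>j. b j * ln (b j / c j)"] by simp
  have "Q \<le> P" unfolding P_def Q_def by (intro sum_mono) (auto simp: A_def)
  show ?thesis
  proof (cases "P = Q")
    case True
    have "sum b J * ln (sum b J / sum c J) \<le> (\<Sum>j\<in>J. b j * ln (b j / c j))"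
      using fin pos by (intro log_sum_inequality) auto
    then show ?thesis using dist True sb sc by simp
  next
    case False
    with \<open>Q \<le> P\<close> have "A \<noteq> {}" unfolding P_def Q_def by auto
    then have Q0: "0 < Q" unfolding Q_def using finA pos by (intro sum_pos) (auto simp: A_def)
    have "B \<noteq> {}" using bB cB False by auto
    then have "0 < sum b B" using finB pos by (intro sum_pos) (auto simp: B_def)
    then have "P < 1" using bB by simp
    moreover have "(2 * (P - Q))^2 = 4 * (P - Q)^2" by (simp add: power2_eq_square algebra_simps)
    ultimately show ?thesis using binary_pinsker[OF Q0 \<open>Q \<le> P\<close>] coarse
      unfolding dist by linarith
  qed
qed

section \<open>Clipped rescalings of probability vectors\<close>

definition clip :: "real \<Rightarrow> real \<Rightarrow> real \<Rightarrow> real" where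
  "clip lo hi x = min (max x lo) hi"

lemma clip_pos: "0 < lo \<Longrightarrow> 0 < hi \<Longrightarrow> 0 < clip lo hi x"
  unfolding clip_def by simp

lemma clip_bounds: "min lo hi \<le> clip lo hi x" "clip lo hi x \<le> hi"
  unfolding clip_def by auto

lemma clip_scaled_le_add:
  assumes "0 \<le> a" and "s \<le> 1" and "0 \<le> lo"
  shows "clip lo hi (s * a) \<le> a + lo"
proof -
  have "s * a \<le> a" using mult_right_mono[OF assms(2,1)] by simp
  then show ?thesis unfolding clip_def using assms(1,3) by (simp add: min_le_iff_disj)
qed

text \<open>Where \<open>b = clip lo hi (s a)\<close> is clipped from below, either \<open>b = c\<close> or \<open>ln (b/c) < 0\<close> and
  \<open>b/s \<ge> a\<close>; where it is clipped from above, \<open>ln (b/c) \<ge> 0\<close> and \<open>b/s \<le> a\<close>.\<close>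

lemma clip_scaled_log_ratio_le:
  assumes s: "0 < s" and a: "0 \<le> a" and lo: "0 < lo" and hi: "0 < hi"
    and c: "min lo hi \<le> c" "c \<le> hi"
  shows "clip lo hi (s * a) / s * ln (clip lo hi (s * a) / c) \<le> a * ln (clip lo hi (s * a) / c)"
proof -
  define b where "b = clip lo hi (s * a)"
  have b0: "0 < b" unfolding b_def using lo hi by (rule clip_pos)
  have c0: "0 < c" using c lo hi by linarith
  consider (inside) "lo \<le> s * a" "s * a \<le> hi" | (below) "s * a < lo" | (above) "hi < s * a"
    by linarith
  then have "b / s * ln (b / c) \<le> a * ln (b / c)"
  proof cases
    case inside
    then have "b = s * a" unfolding b_def clip_def by simp
    then show ?thesis using s by simp
  next
    case below
    show ?thesis
    proof (cases "b < c")
      case True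
      have "b = min lo hi" using below unfolding b_def clip_def by simp
      with True c have "b = lo" by linarith
      then have "a \<le> b / s" using below s by (simp add: field_simps)
      moreover have "ln (b / c) \<le> 0" using True b0 c0 by simp
      ultimately show ?thesis by (rule mult_right_mono_neg)
    next
      case False
      have "b = min lo hi" using below unfolding b_def clip_def by simp
      with False c have "b = c" by linarith
      then show ?thesis by simp
    qed
  next
    case above
    then have "b = hi" unfolding b_def clip_def by simp
    then have "b / s \<le> a" and "0 \<le> ln (b / c)"
      using above s c c0 by (simp_all add: field_simps)
    then show ?thesis by (rule mult_right_mono)
  qed
  then show ?thesis unfolding b_def .
qed

lemma kl_le_weighted_log_ratio_of_clip_scaled:
  fixes a b c :: "'a \<Rightarrow> real" and s lo hi :: real
  assumes fin: "finite J" and s: "0 < s" "s \<le> 1" and lo: "0 < lo" and hi: "0 < hi"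
    and a: "\<forall>j\<in>J. 0 \<le> a j" and b: "\<forall>j\<in>J. b j = clip lo hi (s * a j)"
    and c: "\<forall>j\<in>J. min lo hi \<le> c j \<and> c j \<le> hi"
    and sum_b: "sum b J = 1" and sum_c: "sum c J = 1"
  shows "(\<Sum>j\<in>J. b j * ln (b j / c j)) \<le> (\<Sum>j\<in>J. a j * ln (b j / c j))"
    (is "?KL \<le> _")
proof -
  have "0 < min lo hi" using lo hi by simp
  then have "\<forall>j\<in>J. 0 < b j \<and> 0 < c j"
    using b c clip_pos[OF lo hi] by (auto intro: less_le_trans)
  then have "0 \<le> ?KL" using log_sum_inequality[OF fin, of b c] sum_b sum_c by simp
  then have "?KL \<le> ?KL / s" using s by (simp add: le_divide_eq mult_left_le)
  also have "\<dots> = (\<Sum>j\<in>J. b j / s * ln (b j / c j))" by (simp add: sum_divide_distrib)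
  also have "\<dots> \<le> (\<Sum>j\<in>J. a j * ln (b j / c j))"
    using clip_scaled_log_ratio_le[OF s(1) _ lo hi] a b c by (intro sum_mono) auto
  finally show ?thesis .
qed

lemma sum_abs_diff_le_of_le_add:
  fixes x y :: "'a \<Rightarrow> real" and \<beta> :: real
  assumes "\<forall>j\<in>J. y j \<le> x j + \<beta>" and "0 \<le> \<beta>" and "sum x J = sum y J"
  shows "(\<Sum>j\<in>J. \<bar>x j - y j\<bar>) \<le> 2 * card J * \<beta>"
proof -
  have "(\<Sum>j\<in>J. \<bar>x j - y j\<bar>) = (\<Sum>j\<in>J. 2 * max (y j - x j) 0 - (y j - x j))"
    by (intro sum.cong) (auto simp: max_def)
  also have "\<dots> = 2 * (\<Sum>j\<in>J. max (y j - x j) 0)"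
    using assms(3) by (simp add: sum_subtractf sum_distrib_left)
  also have "\<dots> \<le> 2 * (\<Sum>j\<in>J. \<beta>)"
    using assms(1,2) by (intro mult_left_mono sum_mono) auto
  finally show ?thesis by simp
qed

lemma l1_dist_clip_scaled_ge:
  fixes a w b c :: "'a \<Rightarrow> real" and s t lo :: real
  assumes s: "s \<le> 1" and t: "t \<le> 1" and lo: "0 \<le> lo"
    and nonneg: "\<forall>j\<in>J. 0 \<le> a j \<and> 0 \<le> w j"
    and b: "\<forall>j\<in>J. b j = clip lo hi (s * a j)" and c: "\<forall>j\<in>J. c j = clip lo hi (t * w j)"
    and "sum a J = 1" "sum w J = 1" "sum b J = 1" "sum c J = 1"
  shows "(\<Sum>j\<in>J. \<bar>a j - w j\<bar>) - 4 * card J * lo \<le> (\<Sum>j\<in>J. \<bar>b j - c j\<bar>)"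
proof -
  have "(\<Sum>j\<in>J. \<bar>a j - b j\<bar>) \<le> 2 * card J * lo"
    using assms clip_scaled_le_add by (intro sum_abs_diff_le_of_le_add) auto
  moreover have "(\<Sum>j\<in>J. \<bar>w j - c j\<bar>) \<le> 2 * card J * lo"
    using assms clip_scaled_le_add by (intro sum_abs_diff_le_of_le_add) auto
  moreover have "(\<Sum>j\<in>J. \<bar>a j - w j\<bar>)
      \<le> (\<Sum>j\<in>J. \<bar>a j - b j\<bar> + \<bar>b j - c j\<bar> + \<bar>w j - c j\<bar>)"
    by (intro sum_mono) linarith
  ultimately show ?thesis by (simp add: sum.distrib)
qed

lemma log_gap_ge_of_clip_scaled:
  fixes a w b c :: "'a \<Rightarrow> real" and s t lo hi :: real
  assumes fin: "finite J" and s: "0 < s" "s \<le> 1" and t: "0 < t" "t \<le> 1"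
    and lo: "0 < lo" and hi: "0 < hi" and nonneg: "\<forall>j\<in>J. 0 \<le> a j \<and> 0 \<le> w j"
    and b: "\<forall>j\<in>J. b j = clip lo hi (s * a j)" and c: "\<forall>j\<in>J. c j = clip lo hi (t * w j)"
    and sum_a: "sum a J = 1" and sum_w: "sum w J = 1" and sum_b: "sum b J = 1" and sum_c: "sum c J = 1"
    and far: "4 * card J * lo \<le> (\<Sum>j\<in>J. \<bar>a j - w j\<bar>)"
  shows "((\<Sum>j\<in>J. \<bar>a j - w j\<bar>) - 4 * card J * lo)^2 / 2
    \<le> (\<Sum>j\<in>J. a j * (ln (b j) - ln (c j)))"
proof -
  have pos: "\<forall>j\<in>J. 0 < b j \<and> 0 < c j" using b c lo hi by (simp add: clip_pos)
  have "((\<Sum>j\<in>J. \<bar>a j - w j\<bar>) - 4 * card J * lo)^2 \<le> (\<Sum>j\<in>J. \<bar>b j - c j\<bar>)^2"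
    using l1_dist_clip_scaled_ge[OF s(2) t(2) _ nonneg b c sum_a sum_w sum_b sum_c] far lo
    by (intro power_mono) auto
  also have "\<dots> / 2 \<le> (\<Sum>j\<in>J. b j * ln (b j / c j))"
    using pinsker_inequality[OF fin pos sum_b sum_c] .
  also have "\<dots> \<le> (\<Sum>j\<in>J. a j * ln (b j / c j))"
    using kl_le_weighted_log_ratio_of_clip_scaled[OF fin s lo hi _ b _ sum_b sum_c] nonneg c
    by (simp add: clip_bounds)
  also have "\<dots> = (\<Sum>j\<in>J. a j * (ln (b j) - ln (c j)))"
  proof (rule sum.cong)
    fix j assume "j \<in> J"
    then have "b j \<noteq> 0" "c j \<noteq> 0" using pos by force+
    then show "a j * ln (b j / c j) = a j * (ln (b j) - ln (c j))" by (simp add: ln_div)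
  qed simp
  finally show ?thesis by (simp add: divide_right_mono)
qed

section \<open>Normalized value vectors\<close>

lemma l1_dist_normalize_le:
  fixes x :: "'a \<Rightarrow> real"
  assumes x: "\<forall>j\<in>J. 0 \<le> x j" and S0: "0 < sum x J" and N: "0 < N"
    and lower: "(1 - \<epsilon>) * N \<le> sum x J" and upper: "sum x J \<le> (1 + \<epsilon>) * N"
  shows "(\<Sum>j\<in>J. \<bar>x j / sum x J - x j / N\<bar>) \<le> \<epsilon>"
proof -
  have "(\<Sum>j\<in>J. \<bar>x j / sum x J - x j / N\<bar>) = (\<Sum>j\<in>J. x j * \<bar>1 / sum x J - 1 / N\<bar>)"
  proof (rule sum.cong)
    fix j assume "j \<in> J"
    have "x j / sum x J - x j / N = x j * (1 / sum x J - 1 / N)" by (simp add: right_diff_distrib)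
    then show "\<bar>x j / sum x J - x j / N\<bar> = x j * \<bar>1 / sum x J - 1 / N\<bar>"
      using x \<open>j \<in> J\<close> by (simp add: abs_mult)
  qed simp
  also have "\<dots> = sum x J * \<bar>1 / sum x J - 1 / N\<bar>" by (simp add: sum_distrib_right)
  also have "\<dots> = \<bar>1 - sum x J / N\<bar>"
  proof -
    have "sum x J * (1 / sum x J - 1 / N) = 1 - sum x J / N" using S0 by (simp add: right_diff_distrib)
    then show ?thesis using S0 by (metis abs_mult abs_of_pos)
  qed
  also have "\<dots> \<le> \<epsilon>"
  proof -
    have "1 - \<epsilon> \<le> sum x J / N" using lower N by (simp add: pos_le_divide_eq)
    moreover have "sum x J / N \<le> 1 + \<epsilon>" using upper N by (simp add: pos_divide_le_eq)
    ultimately show ?thesis by linarith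
  qed
  finally show ?thesis .
qed

lemma l1_dist_normalized_ge:
  fixes x y :: "'a \<Rightarrow> real"
  assumes x: "\<forall>j\<in>J. 0 \<le> x j" "0 < sum x J" "0 < X"
      "(1 - \<epsilon>) * X \<le> sum x J" "sum x J \<le> (1 + \<epsilon>) * X"
    and y: "\<forall>j\<in>J. 0 \<le> y j" "0 < sum y J" "0 < Y"
      "(1 - \<epsilon>) * Y \<le> sum y J" "sum y J \<le> (1 + \<epsilon>) * Y"
  shows "(\<Sum>j\<in>J. \<bar>x j / X - y j / Y\<bar>) - 2 * \<epsilon>
    \<le> (\<Sum>j\<in>J. \<bar>x j / sum x J - y j / sum y J\<bar>)"
proof -
  have "(\<Sum>j\<in>J. \<bar>x j / X - y j / Y\<bar>)
    \<le> (\<Sum>j\<in>J. \<bar>x j / sum x J - x j / X\<bar> + \<bar>x j / sum x J - y j / sum y J\<bar>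
               + \<bar>y j / sum y J - y j / Y\<bar>)"
    by (intro sum_mono) linarith
  also have "\<dots> = (\<Sum>j\<in>J. \<bar>x j / sum x J - x j / X\<bar>)
      + (\<Sum>j\<in>J. \<bar>x j / sum x J - y j / sum y J\<bar>) + (\<Sum>j\<in>J. \<bar>y j / sum y J - y j / Y\<bar>)"
    by (simp add: sum.distrib)
  finally show ?thesis
    using l1_dist_normalize_le[OF x] l1_dist_normalize_le[OF y] by linarith
qed

lemma half_mean_lt_total:
  fixes m :: nat and \<epsilon> \<mu> \<mu>l S :: real
  assumes lower: "(1 - \<epsilon>) * m * \<mu> \<le> S" and \<epsilon>: "\<epsilon> < 1/2"
    and \<mu>l: "0 < \<mu>l" "\<mu>l \<le> \<mu>" and m: "1 \<le> m"
  shows "real m * \<mu>l < 2 * S"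
proof -
  have "real m * \<mu>l \<le> real m * \<mu>" using \<mu>l(2) by (simp add: mult_left_mono)
  also have "\<dots> < 2 * ((1 - \<epsilon>) * m * \<mu>)" using \<epsilon> \<mu>l m by (simp add: algebra_simps)
  also have "\<dots> \<le> 2 * S" using lower by simp
  finally show ?thesis .
qed

lemma typical_vbar_l1_dist_ge:
  assumes profile: "typical n m \<mu> \<delta> \<epsilon> v" and ik: "i < n" "k < n" "i \<noteq> k"
    and m: "1 \<le> m" and \<epsilon>: "\<epsilon> < 1" and \<mu>: "0 < \<mu> i" "0 < \<mu> k"
    and v: "\<forall>j<m. 0 \<le> v i j \<and> 0 \<le> v k j"
  shows "(1 - \<epsilon>) * \<delta> - 2 * \<epsilon> \<le> (\<Sum>j<m. \<bar>vbar m v i j - vbar m v k j\<bar>)"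
proof -
  have bounds: "(1 - \<epsilon>) * (m * \<mu> a) \<le> (\<Sum>j<m. v a j)" "(\<Sum>j<m. v a j) \<le> (1 + \<epsilon>) * (m * \<mu> a)"
    if "a < n" for a
    using profile that unfolding typical_def by (simp_all add: mult.assoc)
  have pos: "0 < m * \<mu> a" "0 < (\<Sum>j<m. v a j)" if "a < n" "0 < \<mu> a" for a
  proof -
    show "0 < m * \<mu> a" using that(2) m by simp
    then have "0 < (1 - \<epsilon>) * (m * \<mu> a)" using \<epsilon> by simp
    then show "0 < (\<Sum>j<m. v a j)" using bounds[OF that(1)] by linarith
  qed
  have rescale: "\<bar>v i j / \<mu> i - v k j / \<mu> k\<bar> = m * \<bar>v i j / (m * \<mu> i) - v k j / (m * \<mu> k)\<bar>" for j
  proof -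
    have "v i j / \<mu> i - v k j / \<mu> k = m * (v i j / (m * \<mu> i) - v k j / (m * \<mu> k))"
      using m \<mu> by (simp add: field_simps)
    then show ?thesis by (simp add: abs_mult)
  qed
  have "(1 - \<epsilon>) * \<delta> * m \<le> (\<Sum>j<m. \<bar>v i j / \<mu> i - v k j / \<mu> k\<bar>)"
    using profile ik unfolding typical_def by blast
  then have "(1 - \<epsilon>) * \<delta> \<le> (\<Sum>j<m. \<bar>v i j / (m * \<mu> i) - v k j / (m * \<mu> k)\<bar>)"
    using m unfolding rescale sum_distrib_left[symmetric] by (simp add: mult.commute)
  moreover have "(\<Sum>j<m. \<bar>v i j / (m * \<mu> i) - v k j / (m * \<mu> k)\<bar>) - 2 * \<epsilon>
      \<le> (\<Sum>j<m. \<bar>vbar m v i j - vbar m v k j\<bar>)"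
    unfolding vbar_def using v pos[OF ik(1) \<mu>(1)] pos[OF ik(2) \<mu>(2)] bounds[OF ik(1)] bounds[OF ik(2)]
    by (intro l1_dist_normalized_ge) auto
  ultimately show ?thesis by linarith
qed

section \<open>Bids and allocation of the PRD mechanism\<close>

lemma bid_at_eq_clip:
  "bid_at m \<delta> \<mu>l v i s j = clip (prd_bmin \<delta> m) (prd_bmax \<mu>l m) (s * vbar m v i j)"
  unfolding bid_at_def clip_def ..

lemma sum_vbar: "0 < (\<Sum>j<m. v i j) \<Longrightarrow> (\<Sum>j<m. vbar m v i j) = 1"
  unfolding vbar_def by (simp add: sum_divide_distrib[symmetric])

lemma vbar_nonneg: "0 \<le> v i j \<Longrightarrow> 0 \<le> (\<Sum>j<m. v i j) \<Longrightarrow> 0 \<le> vbar m v i j"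
  unfolding vbar_def by simp

lemma total_value_pos:
  fixes x :: "nat \<Rightarrow> real"
  assumes "0 < \<mu>l" and "real m * \<mu>l < 2 * (\<Sum>j<m. x j)"
  shows "0 < real m" "0 < (\<Sum>j<m. x j)"
proof -
  show m: "0 < real m" using assms(2) by (cases m) auto
  have "0 < real m * \<mu>l" using assms(1) m by simp
  then show "0 < (\<Sum>j<m. x j)" using assms(2) by linarith
qed

lemma vbar_lt_prd_bmax:
  assumes "v i j \<le> 1" and \<mu>l: "0 < \<mu>l" and total: "real m * \<mu>l < 2 * (\<Sum>j<m. v i j)"
  shows "vbar m v i j < prd_bmax \<mu>l m"
proof -
  note pos = total_value_pos[OF \<mu>l total]
  have "vbar m v i j \<le> 1 / (\<Sum>j<m. v i j)"
    unfolding vbar_def using assms(1) pos by (simp add: divide_right_mono)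
  also have "\<dots> < 2 / (\<mu>l * m)" using total pos \<mu>l by (simp add: field_simps)
  finally show ?thesis unfolding prd_bmax_def .
qed

lemma h_fun_zero_lt_one:
  assumes "0 \<le> \<delta>" and "\<delta> < 25"
  shows "h_fun m \<delta> \<mu>l v i 0 < 1"
proof -
  have "h_fun m \<delta> \<mu>l v i 0 \<le> (\<Sum>j<m. prd_bmin \<delta> m)"
    unfolding h_fun_def bid_at_def prd_bmin_def prd_l_def using assms by (intro sum_mono) simp
  also have "\<dots> < 1" unfolding prd_bmin_def prd_l_def using assms by simp
  finally show ?thesis .
qed

lemma h_fun_gt_one:
  assumes s: "1 < s" and v: "\<forall>j<m. 0 \<le> v i j \<and> v i j \<le> 1" and \<mu>l: "0 < \<mu>l"
    and total: "real m * \<mu>l < 2 * (\<Sum>j<m. v i j)"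
  shows "1 < h_fun m \<delta> \<mu>l v i s"
proof -
  note pos = total_value_pos[OF \<mu>l total]
  note vbar_sum = sum_vbar[where v = v and i = i, OF pos(2)]
  have vbar: "0 \<le> vbar m v i j" "vbar m v i j < prd_bmax \<mu>l m" if "j < m" for j
    using that v pos vbar_nonneg vbar_lt_prd_bmax[where v = v and i = i, OF _ \<mu>l total] by auto
  have le: "vbar m v i j \<le> bid_at m \<delta> \<mu>l v i s j" if "j < m" for j
    using mult_right_mono[of 1 s "vbar m v i j"] vbar[OF that] s unfolding bid_at_def by simp
  have "\<exists>j<m. 0 < vbar m v i j"
  proof (rule ccontr)
    assume "\<not> ?thesis"
    then have "\<forall>j<m. vbar m v i j \<le> 0" by (meson not_less)
    then have "(\<Sum>j<m. vbar m v i j) \<le> 0" by (intro sum_nonpos) simp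
    then show False using vbar_sum by simp
  qed
  then obtain j0 where j0: "j0 < m" "0 < vbar m v i j0" by blast
  have "vbar m v i j0 < bid_at m \<delta> \<mu>l v i s j0"
    using mult_strict_right_mono[OF s j0(2)] vbar[OF j0(1)] unfolding bid_at_def by simp
  then have "(\<Sum>j<m. vbar m v i j) < h_fun m \<delta> \<mu>l v i s"
    unfolding h_fun_def using le j0(1) by (intro sum_strict_mono_ex1) auto
  then show ?thesis using vbar_sum by simp
qed

lemma prd_fallback_bids_sum_gt_one:
  assumes v: "\<forall>j<m. 0 \<le> v i j \<and> v i j \<le> 1" and \<delta>: "0 \<le> \<delta>" and \<mu>l: "0 < \<mu>l"
    and total: "real m * \<mu>l < 2 * (\<Sum>j<m. v i j)"
    and at_max: "\<forall>j<m. 0 < v i j \<longrightarrow> b i j = prd_bmax \<mu>l m"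
    and above_min: "\<forall>j<m. prd_bmin \<delta> m \<le> b i j"
  shows "1 < (\<Sum>j<m. b i j)"
proof -
  note pos = total_value_pos[OF \<mu>l total]
  have bmax: "0 < prd_bmax \<mu>l m" unfolding prd_bmax_def using \<mu>l pos by simp
  have "1 < (\<Sum>j<m. v i j) * prd_bmax \<mu>l m"
    using total pos \<mu>l unfolding prd_bmax_def by (simp add: field_simps)
  also have "\<dots> = (\<Sum>j<m. v i j * prd_bmax \<mu>l m)" by (simp add: sum_distrib_right)
  also have "\<dots> \<le> (\<Sum>j<m. b i j)"
  proof (rule sum_mono)
    fix j assume "j \<in> {..<m}"
    then have j: "j < m" by simp
    show "v i j * prd_bmax \<mu>l m \<le> b i j"
    proof (cases "0 < v i j")
      case True
      then show ?thesis using at_max v j bmax by (simp add: mult_left_le_one_le)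
    next
      case False
      then have "v i j = 0" using v j by force
      moreover have "0 \<le> prd_bmin \<delta> m" unfolding prd_bmin_def prd_l_def using \<delta> by simp
      ultimately show ?thesis using above_min j by force
    qed
  qed
  finally show ?thesis .
qed

lemma prd_bids_eq_clip_scaled:
  assumes bids: "prd_bids n m \<delta> \<mu>l v b" and i: "i < n" and \<delta>: "0 < \<delta>" "\<delta> < 1" and \<mu>l: "0 < \<mu>l"
    and v: "\<forall>j<m. 0 \<le> v i j \<and> v i j \<le> 1" and total: "real m * \<mu>l < 2 * (\<Sum>j<m. v i j)"
  obtains s where "0 < s" "s \<le> 1"
    "\<forall>j<m. b i j = clip (prd_bmin \<delta> m) (prd_bmax \<mu>l m) (s * vbar m v i j)"
    "(\<Sum>j<m. b i j) = 1"
proof -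
  note branch = bids[unfolded prd_bids_def, rule_format, OF i]
  have "\<exists>s>0. s \<le> 1 \<and> (\<forall>j<m. b i j = clip (prd_bmin \<delta> m) (prd_bmax \<mu>l m) (s * vbar m v i j))
    \<and> (\<Sum>j<m. b i j) = 1"
  proof (cases "(SUP s\<in>{0..}. h_fun m \<delta> \<mu>l v i s) \<ge> 1")
    case True
    from True branch obtain s where "s \<ge> 0" and hs: "h_fun m \<delta> \<mu>l v i s = 1"
      and bs: "\<forall>j<m. b i j = bid_at m \<delta> \<mu>l v i s j"
      by auto
    have "s \<noteq> 0" using hs h_fun_zero_lt_one[of \<delta> m \<mu>l v i] \<delta> by auto
    moreover have "\<not> 1 < s"
    proof
      assume "1 < s"
      then have "1 < h_fun m \<delta> \<mu>l v i s"
        by (rule h_fun_gt_one[where v = v and i = i, OF _ v \<mu>l total])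
      with hs show False by simp
    qed
    moreover have "(\<Sum>j<m. b i j) = 1" using hs bs unfolding h_fun_def by simp
    ultimately show ?thesis using \<open>s \<ge> 0\<close> bs by (intro exI[of _ s]) (auto simp: bid_at_eq_clip)
  next
    case False
    from False branch have at_max: "\<forall>j<m. 0 < v i j \<longrightarrow> b i j = prd_bmax \<mu>l m"
      and above_min: "\<forall>j<m. prd_bmin \<delta> m \<le> b i j" and "(\<Sum>j<m. b i j) = 1"
      by auto
    moreover have "1 < (\<Sum>j<m. b i j)"
      using prd_fallback_bids_sum_gt_one[where v = v and i = i and b = b, OF v _ \<mu>l total at_max above_min] \<delta>
      by simp
    ultimately show ?thesis by simp
  qed
  then show ?thesis using that by blast
qed

lemma prd_log_bid_gap_ge:
  assumes bids: "prd_bids n m \<delta> \<mu>l v b" and ik: "i < n" "k < n"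
    and \<delta>: "0 < \<delta>" "\<delta> < 1" and \<mu>l: "0 < \<mu>l"
    and vi: "\<forall>j<m. 0 \<le> v i j \<and> v i j \<le> 1" and vk: "\<forall>j<m. 0 \<le> v k j \<and> v k j \<le> 1"
    and total_i: "real m * \<mu>l < 2 * (\<Sum>j<m. v i j)" and total_k: "real m * \<mu>l < 2 * (\<Sum>j<m. v k j)"
    and m: "1 \<le> m" and far: "4 * \<delta> / 25 \<le> (\<Sum>j<m. \<bar>vbar m v i j - vbar m v k j\<bar>)"
  shows "((\<Sum>j<m. \<bar>vbar m v i j - vbar m v k j\<bar>) - 4 * \<delta> / 25)^2 / 2
    \<le> (\<Sum>j<m. vbar m v i j * (ln (b i j) - ln (b k j)))"
proof -
  obtain s where s: "0 < s" "s \<le> 1"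
    and bi: "\<forall>j<m. b i j = clip (prd_bmin \<delta> m) (prd_bmax \<mu>l m) (s * vbar m v i j)"
    and sum_bi: "(\<Sum>j<m. b i j) = 1"
    using prd_bids_eq_clip_scaled[OF bids ik(1) \<delta> \<mu>l vi total_i] .
  obtain t where t: "0 < t" "t \<le> 1"
    and bk: "\<forall>j<m. b k j = clip (prd_bmin \<delta> m) (prd_bmax \<mu>l m) (t * vbar m v k j)"
    and sum_bk: "(\<Sum>j<m. b k j) = 1"
    using prd_bids_eq_clip_scaled[OF bids ik(2) \<delta> \<mu>l vk total_k] .
  have bmin: "0 < prd_bmin \<delta> m" and bmax: "0 < prd_bmax \<mu>l m"
    and card: "4 * card {..<m} * prd_bmin \<delta> m = 4 * \<delta> / 25"
    using m \<delta> \<mu>l unfolding prd_bmin_def prd_bmax_def prd_l_def by simp_all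
  note pos_i = total_value_pos(2)[OF \<mu>l total_i] and pos_k = total_value_pos(2)[OF \<mu>l total_k]
  have nonneg: "\<forall>j\<in>{..<m}. 0 \<le> vbar m v i j \<and> 0 \<le> vbar m v k j"
    using vi vk pos_i pos_k by (simp add: vbar_nonneg)
  show ?thesis
    using log_gap_ge_of_clip_scaled[OF finite_lessThan s t bmin bmax nonneg _ _
        sum_vbar[where v = v and i = i, OF pos_i] sum_vbar[where v = v and i = k, OF pos_k] sum_bi sum_bk] bi bk far
    unfolding card by simp
qed

lemma lower_mean_lt_two:
  fixes x :: "nat \<Rightarrow> real"
  assumes "\<forall>j<m. x j \<le> 1" and "real m * \<mu>l < 2 * (\<Sum>j<m. x j)"
  shows "\<mu>l < 2"
proof -
  have "(\<Sum>j<m. x j) \<le> real m" using assms(1) sum_mono[of "{..<m}" x "\<lambda>_. 1"] by simp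
  then have "real m * \<mu>l < real m * 2" using assms(2) by linarith
  then show ?thesis by (simp add: mult_less_cancel_left)
qed

lemma prd_C_pos:
  assumes "0 < \<delta>" and "\<delta> < 1" and "0 < \<mu>l" and "\<mu>l < 2"
  shows "0 < prd_C \<delta> \<mu>l"
proof -
  have "\<mu>l * \<delta> < 2 * 1" using assms by (intro mult_strict_mono) auto
  then show ?thesis unfolding prd_C_def prd_l_def using assms by (intro ln_gt_zero) (simp add: field_simps)
qed

lemma prd_alloc_weighted_diff:
  "(\<Sum>j<m. w j * (prd_alloc n m \<delta> \<mu>l b i j - prd_alloc n m \<delta> \<mu>l b k j))
    = 1 / (n * prd_C \<delta> \<mu>l) * (\<Sum>j<m. w j * (ln (b i j) - ln (b k j)))"
proof -
  have "prd_alloc n m \<delta> \<mu>l b i j - prd_alloc n m \<delta> \<mu>l b k j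
      = (ln (b i j) - ln (b k j)) / (n * prd_C \<delta> \<mu>l)" for j
    unfolding prd_alloc_def by (simp add: diff_divide_distrib add_divide_distrib)
  then show ?thesis by (simp add: sum_distrib_left)
qed

lemma margin_sq_ge:
  fixes \<delta> \<epsilon> d :: real
  assumes \<epsilon>: "0 < \<epsilon>" "\<epsilon> < \<delta> / 25" and \<delta>: "\<delta> < 1" and d: "(1 - \<epsilon>) * \<delta> - 2 * \<epsilon> \<le> d"
  shows "4 * \<delta> / 25 \<le> d" and "\<delta>^2 / 4 \<le> (d - 4 * \<delta> / 25)^2 / 2"
proof -
  have "\<epsilon> * \<delta> \<le> \<epsilon>" using \<epsilon> \<delta> by (simp add: mult_left_le)
  moreover have "(1 - \<epsilon>) * \<delta> = \<delta> - \<epsilon> * \<delta>" by (simp add: algebra_simps)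
  ultimately have far: "18 * \<delta> / 25 \<le> d - 4 * \<delta> / 25" using \<epsilon> d by linarith
  then show "4 * \<delta> / 25 \<le> d" using \<epsilon> by linarith
  have "\<delta>^2 / 4 \<le> (18 * \<delta> / 25)^2 / 2"
    using zero_le_power2[of \<delta>] by (simp add: power_mult_distrib power_divide)
  also have "\<dots> \<le> (d - 4 * \<delta> / 25)^2 / 2" using far \<epsilon> by (intro divide_right_mono power_mono) auto
  finally show "\<delta>^2 / 4 \<le> (d - 4 * \<delta> / 25)^2 / 2" .
qed

theorem mainTheorem4:
  fixes n m :: nat and D :: "(nat \<Rightarrow> real) measure" and \<mu>l \<delta> \<epsilon> :: real
    and v b :: "nat \<Rightarrow> nat \<Rightarrow> real" and i k :: nat
  assumes "m \<ge> 1"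
    and "standing_assumptions n D \<mu>l \<delta>"
    and "0 < \<epsilon>" and "\<epsilon> < \<delta> / 25"
    and "\<forall>i<n. \<forall>j<m. 0 \<le> v i j \<and> v i j \<le> 1"
    and "typical n m (agent_mean D) \<delta> \<epsilon> v"
    and "prd_bids n m \<delta> \<mu>l v b"
    and "i < n" and "k < n" and "i \<noteq> k"
  shows "(\<Sum>j<m. vbar m v i j * (prd_alloc n m \<delta> \<mu>l b i j - prd_alloc n m \<delta> \<mu>l b k j))
           = 1 / (n * prd_C \<delta> \<mu>l) * (\<Sum>j<m. vbar m v i j * (ln (b i j) - ln (b k j)))
       \<and> 1 / (n * prd_C \<delta> \<mu>l) * (\<Sum>j<m. vbar m v i j * (ln (b i j) - ln (b k j)))
           \<ge> \<delta>^2 / (4 * n * prd_C \<delta> \<mu>l)"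
proof -
  from assms(2) have \<mu>l: "0 < \<mu>l" and \<delta>: "0 < \<delta>" "\<delta> < 1"
    and mean: "\<forall>a<n. \<mu>l \<le> agent_mean D a" unfolding standing_assumptions_def by auto
  have v: "\<forall>j<m. 0 \<le> v a j \<and> v a j \<le> 1" if "a < n" for a using assms(5) that by auto
  have total: "real m * \<mu>l < 2 * (\<Sum>j<m. v a j)" if "a < n" for a
    using assms(4,6) \<delta> mean that unfolding typical_def
    by (intro half_mean_lt_total[OF _ _ \<mu>l _ assms(1)]) auto
  define d where "d = (\<Sum>j<m. \<bar>vbar m v i j - vbar m v k j\<bar>)"
  define F where "F = (\<Sum>j<m. vbar m v i j * (ln (b i j) - ln (b k j)))"
  have "(1 - \<epsilon>) * \<delta> - 2 * \<epsilon> \<le> d"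
    unfolding d_def using assms(4,8,9) \<delta> \<mu>l mean v
    by (intro typical_vbar_l1_dist_ge[OF assms(6,8,9,10,1)]) auto
  note margin = margin_sq_ge[OF assms(3,4) \<delta>(2) this]
  have "(d - 4 * \<delta> / 25)^2 / 2 \<le> F"
    unfolding d_def F_def using margin(1) \<delta>
    by (intro prd_log_bid_gap_ge[OF assms(7,8,9) \<delta> \<mu>l v v total total assms(1)])
      (simp_all add: d_def assms(8,9))
  with margin(2) have "\<delta>^2 / 4 \<le> F" by linarith
  moreover have "0 < n * prd_C \<delta> \<mu>l"
    using lower_mean_lt_two[OF _ total[OF assms(8)]] v[OF assms(8)] assms(8)
    by (intro mult_pos_pos prd_C_pos \<delta> \<mu>l) auto
  ultimately have "\<delta>^2 / 4 / (n * prd_C \<delta> \<mu>l) \<le> F / (n * prd_C \<delta> \<mu>l)"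
    by (intro divide_right_mono) auto
  then show ?thesis unfolding prd_alloc_weighted_diff F_def by (simp add: mult.assoc)
qed

end
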